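(* Let $(\mathsf{E},\mathcal{F},\mu)$ be a probability space, let $P_{1},P_{2}$ be $\mu$-invariant Markov kernels, and for each $i\in\{1,2\}$ let $T_{i}$ be either $P_{i}$ or $P_{i}^{*}P_{i}$. Let $\beta_{1},\beta_{2}:(0,\infty)\to(0,\infty)$ be decreasing with $\beta_{i}(s)\downarrow0$ as $s\to\infty$, and let $\Phi_{1},\Phi_{2}:\mathrm{L}^{2}(\mu)\to[0,\infty]$ be such that for $i=1,2$, all $f\in\mathrm{L}^{2}(\mu)$, $c>0$, $n\in\mathbb{N}$: $\Phi_{i}(cf)=c^{2}\Phi_{i}(f)$, $\Phi_{i}(P_{i}^{n}f)\le\Phi_{i}(f)$, $\|f-\mu(f)\|_{2}^{2}\le a_{i}\Phi_{i}(f-\mu(f))$ with $a_{i}:=\sup_{g\in\mathrm{L}_{0}^{2}(\mu)\setminus\{0\}}\|g\|_{2}^{2}/\Phi_{i}(g)$; assume also $\Phi_{1}(P_{2}^{n}f)\le\Phi_{1}(f)$ for all $n\in\mathbb{N}$, $f\in\mathrm{L}_{0}^{2}(\mu)$. Assume that for all $s>0$ and $f\in\mathrm{L}_{0}^{2}(\mu)$, \[ \|f\|_{2}^{2}\le s\,\mathcal{E}(T_{1},f)+\beta_{1}(s)\Phi_{1}(f),\qquad\mathcal{E}(T_{1},f)\le s\,\mathcal{E}(T_{2},f)+\beta_{2}(s)\Phi_{2}(f). \] Set $\Phi:=\Phi_{1}\vee\Phi_{2}$ and $\beta(s):=\inf\{s_{1}\beta_{2}(s_{2})+\beta_{1}(s_{1}):s_{1}>0,s_{2}>0,s_{1}s_{2}=s\}$.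 Then for all $s>0$ and $f\in\mathrm{L}_{0}^{2}(\mu)$, \[ \|f\|_{2}^{2}\le s\,\mathcal{E}(T_{2},f)+\beta(s)\Phi(f); \] moreover $\beta:(0,\infty)\to(0,\infty)$ is decreasing with $\beta(s)\downarrow0$ as $s\to\infty$, $\Phi(cf)=c^{2}\Phi(f)$ for $c>0$, and $\Phi(P_{2}^{n}f)\le\Phi(f)$ for all $n\in\mathbb{N}$, $f\in\mathrm{L}_{0}^{2}(\mu)$. Finally, writing $K_{i}(u):=u\beta_{i}(1/u)$, $K(u):=u\beta(1/u)$ for $u>0$ and $K^{*},K_{i}^{*}$ for the convex conjugates $K^{*}(v)=\sup_{u\ge0}\{uv-K(u)\}$ (with $K(0)=K_{i}(0)=0$), one has \[ K(u)=\inf\{K_{2}(u_{2})+u_{2}K_{1}(u_{1}):u_{1}>0,u_{2}>0,u_{1}u_{2}=u\},\qquad K^{*}=K_{2}^{*}\circ K_{1}^{*}. \]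
   Context: $\mathrm{L}^{2}(\mu)$ has inner product $\langle f,g\rangle=\int fg\,\mathrm{d}\mu$, norm $\|\cdot\|_{2}$; $\mathrm{L}_{0}^{2}(\mu)$ is the mean-zero subspace; $P^{*}$ is the $\mathrm{L}^{2}(\mu)$-adjoint of $P$; $\mathcal{E}(T,f):=\langle(\mathrm{Id}-T)f,f\rangle$. *)

theory Defs
  imports "HOL-Probability.Probability"
begin

definition L2 :: "'a measure \<Rightarrow> ('a \<Rightarrow> real) set" where
  "L2 M = {f. f \<in> borel_measurable M \<and> integrable M (\<lambda>x. (f x)\<^sup>2)}"

definition L2_0 :: "'a measure \<Rightarrow> ('a \<Rightarrow> real) set" where
  "L2_0 M = {f \<in> L2 M. (\<integral>x. f x \<partial>M) = 0}"

definition inner_L2 :: "'a measure \<Rightarrow> ('a \<Rightarrow> real) \<Rightarrow> ('a \<Rightarrow> real) \<Rightarrow> real" where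
  "inner_L2 M f g = (\<integral>x. f x * g x \<partial>M)"

definition normsq_L2 :: "'a measure \<Rightarrow> ('a \<Rightarrow> real) \<Rightarrow> real" where
  "normsq_L2 M f = (\<integral>x. (f x)\<^sup>2 \<partial>M)"

definition dirichlet :: "'a measure \<Rightarrow> (('a \<Rightarrow> real) \<Rightarrow> ('a \<Rightarrow> real)) \<Rightarrow> ('a \<Rightarrow> real) \<Rightarrow> real" where
  "dirichlet M T f = inner_L2 M (\<lambda>x. f x - T f x) f"

definition invariant_markov_kernel :: "'a measure \<Rightarrow> ('a \<Rightarrow> 'a measure) \<Rightarrow> bool" where
  "invariant_markov_kernel M P \<longleftrightarrow> P \<in> M \<rightarrow>\<^sub>M prob_algebra M \<and> Giry_Monad.bind M P = M"

definition kop :: "('a \<Rightarrow> 'a measure) \<Rightarrow> ('a \<Rightarrow> real) \<Rightarrow> ('a \<Rightarrow> real)" where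
  "kop P f = (\<lambda>x. \<integral>y. f y \<partial>(P x))"

definition L2_adjoint :: "'a measure \<Rightarrow> (('a \<Rightarrow> real) \<Rightarrow> ('a \<Rightarrow> real)) \<Rightarrow> (('a \<Rightarrow> real) \<Rightarrow> ('a \<Rightarrow> real)) \<Rightarrow> bool" where
  "L2_adjoint M A B \<longleftrightarrow> (\<forall>g\<in>L2 M. B g \<in> L2 M) \<and>
     (\<forall>f\<in>L2 M. \<forall>g\<in>L2 M. inner_L2 M (A f) g = inner_L2 M f (B g))"

definition P_or_PstarP :: "'a measure \<Rightarrow> ('a \<Rightarrow> 'a measure) \<Rightarrow> (('a \<Rightarrow> real) \<Rightarrow> ('a \<Rightarrow> real)) \<Rightarrow> bool" where
  "P_or_PstarP M P T \<longleftrightarrow> T = kop P \<or> (\<exists>Q. L2_adjoint M (kop P) Q \<and> T = Q \<circ> kop P)"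

definition a_const :: "'a measure \<Rightarrow> (('a \<Rightarrow> real) \<Rightarrow> ennreal) \<Rightarrow> ennreal" where
  "a_const M \<Phi> = (SUP g\<in>{g \<in> L2_0 M. normsq_L2 M g \<noteq> 0}. ennreal (normsq_L2 M g) / \<Phi> g)"

definition beta_comb :: "(real \<Rightarrow> real) \<Rightarrow> (real \<Rightarrow> real) \<Rightarrow> real \<Rightarrow> real" where
  "beta_comb \<beta>1 \<beta>2 s = Inf {s1 * \<beta>2 s2 + \<beta>1 s1 | s1 s2. s1 > 0 \<and> s2 > 0 \<and> s1 * s2 = s}"

text \<open>K(u) = u beta(1/u) for u > 0, K(0) = 0 (values at u < 0 are irrelevant).\<close>
definition Kfun :: "(real \<Rightarrow> real) \<Rightarrow> real \<Rightarrow> real" where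
  "Kfun \<beta> u = (if u > 0 then u * \<beta> (1 / u) else 0)"

definition convex_conj :: "(real \<Rightarrow> real) \<Rightarrow> ereal \<Rightarrow> ereal" where
  "convex_conj K v = (SUP u\<in>{0::real..}. ereal u * v - ereal (K u))"

end

theory Submission
  imports Defs
begin

(*
  The argument only involves the real numbers ||f||^2, E(T1,f), E(T2,f), Phi1(f), Phi2(f). For every factorisation s = s1 s2, chaining the two weak
  Poincare inequalities gives
    ||f||^2 <= s1 E(T1,f) + beta1(s1) Phi1(f) <= s E(T2,f) + (s1 beta2(s2) + beta1(s1)) Phi(f),
  and taking the infimum over factorisations yields beta. The substitution s_i = 1/u_i turns the
  definition of beta into K(u) = inf {K2(u2) + u2 K1(u1) | u1 u2 = u}, and for such a K
  u v - K2(u2) - u2 K1(u1) = u2 (u1 v - K1(u1)) - K2(u2), so that taking suprema over u1 and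
  then u2 gives K* = K2* o K1*.
*)

lemma le_Inf_factorizations_iff:
  fixes g :: "real \<Rightarrow> real \<Rightarrow> real"
  assumes "s > 0" and "\<And>x y. x > 0 \<Longrightarrow> y > 0 \<Longrightarrow> b \<le> g x y"
  shows "c \<le> Inf {g x y | x y. x > 0 \<and> y > 0 \<and> x * y = s}
           \<longleftrightarrow> (\<forall>x>0. \<forall>y>0. x * y = s \<longrightarrow> c \<le> g x y)"
proof -
  have "g 1 s \<in> {g x y | x y. x > 0 \<and> y > 0 \<and> x * y = s}"
    using \<open>s > 0\<close> by force
  moreover have "bdd_below {g x y | x y. x > 0 \<and> y > 0 \<and> x * y = s}"
    using assms(2) by (force intro: bdd_belowI)
  ultimately show ?thesis
    by (subst le_cInf_iff) blast+
qed

lemma Inf_factorizations_le: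
  fixes g :: "real \<Rightarrow> real \<Rightarrow> real"
  assumes "x > 0" "y > 0" and "\<And>x y. x > 0 \<Longrightarrow> y > 0 \<Longrightarrow> b \<le> g x y"
  shows "Inf {g x' y' | x' y'. x' > 0 \<and> y' > 0 \<and> x' * y' = x * y} \<le> g x y"
  using le_Inf_factorizations_iff[of "x * y" b g] assms by auto

lemma le_beta_comb_iff:
  assumes "s > 0" "\<forall>s>0. 0 \<le> \<beta>1 s" "\<forall>s>0. 0 \<le> \<beta>2 s"
  shows "c \<le> beta_comb \<beta>1 \<beta>2 s
           \<longleftrightarrow> (\<forall>s1>0. \<forall>s2>0. s1 * s2 = s \<longrightarrow> c \<le> s1 * \<beta>2 s2 + \<beta>1 s1)"
  unfolding beta_comb_def using assms by (intro le_Inf_factorizations_iff[of s 0]) auto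

lemma beta_comb_le:
  assumes "\<forall>s>0. 0 \<le> \<beta>1 s" "\<forall>s>0. 0 \<le> \<beta>2 s" "s1 > 0" "s2 > 0"
  shows "beta_comb \<beta>1 \<beta>2 (s1 * s2) \<le> s1 * \<beta>2 s2 + \<beta>1 s1"
  unfolding beta_comb_def using assms by (intro Inf_factorizations_le[of _ _ 0]) auto

lemma beta_comb_nonneg:
  assumes "s > 0" "\<forall>s>0. 0 \<le> \<beta>1 s" "\<forall>s>0. 0 \<le> \<beta>2 s"
  shows "0 \<le> beta_comb \<beta>1 \<beta>2 s"
  using assms by (simp add: le_beta_comb_iff)

lemma beta_comb_pos:
  assumes "s > 0" "\<forall>s>0. 0 < \<beta>1 s" "\<forall>s>0. 0 < \<beta>2 s"
    and "antimono_on {0<..} \<beta>1" "antimono_on {0<..} \<beta>2"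
  shows "0 < beta_comb \<beta>1 \<beta>2 s"
proof -
  have "min (\<beta>1 1) (\<beta>2 s) \<le> s1 * \<beta>2 s2 + \<beta>1 s1"
    if "s1 > 0" "s2 > 0" "s1 * s2 = s" for s1 s2
  proof (cases "s1 \<le> 1")
    case True
    then have "\<beta>1 1 \<le> \<beta>1 s1"
      using monotone_onD[OF assms(4), of s1 1] \<open>s1 > 0\<close> by simp
    moreover have "0 \<le> s1 * \<beta>2 s2" using assms(3) that by (simp add: less_imp_le)
    ultimately show ?thesis by linarith
  next
    case False
    then have "s2 \<le> s" using that by (metis less_eq_real_def mult_le_cancel_right1 not_le)
    then have "\<beta>2 s \<le> \<beta>2 s2"
      using monotone_onD[OF assms(5), of s2 s] assms(1) \<open>s2 > 0\<close> by simp
    moreover have "\<beta>2 s2 \<le> s1 * \<beta>2 s2"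
      using False assms(3) \<open>s2 > 0\<close> by (intro mult_le_cancel_right1[THEN iffD2]) auto
    moreover have "0 \<le> \<beta>1 s1" using assms(2) \<open>s1 > 0\<close> by (simp add: less_imp_le)
    ultimately show ?thesis by linarith
  qed
  then have "min (\<beta>1 1) (\<beta>2 s) \<le> beta_comb \<beta>1 \<beta>2 s"
    using assms(1-3) by (simp add: le_beta_comb_iff less_imp_le)
  moreover have "0 < min (\<beta>1 1) (\<beta>2 s)" using assms(1-3) by simp
  ultimately show ?thesis by linarith
qed

lemma antimono_beta_comb:
  assumes "\<forall>s>0. 0 \<le> \<beta>1 s" "\<forall>s>0. 0 \<le> \<beta>2 s" "antimono_on {0<..} \<beta>2"
  shows "antimono_on {0<..} (beta_comb \<beta>1 \<beta>2)"
proof (rule monotone_onI)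
  fix s s' :: real assume "s \<in> {0<..}" "s' \<in> {0<..}" "s \<le> s'"
  have "beta_comb \<beta>1 \<beta>2 s' \<le> s1 * \<beta>2 s2 + \<beta>1 s1"
    if "s1 > 0" "s2 > 0" "s1 * s2 = s" for s1 s2
  proof -
    have "s2 \<le> s' / s1" using \<open>s \<le> s'\<close> that by (simp add: field_simps mult.commute)
    then have "\<beta>2 (s' / s1) \<le> \<beta>2 s2"
      using monotone_onD[OF assms(3), of s2 "s' / s1"] \<open>s' \<in> {0<..}\<close> that by simp
    moreover have "beta_comb \<beta>1 \<beta>2 (s1 * (s' / s1)) \<le> s1 * \<beta>2 (s' / s1) + \<beta>1 s1"
      using assms(1,2) \<open>s' \<in> {0<..}\<close> that by (intro beta_comb_le) auto
    ultimately show ?thesis using \<open>s1 > 0\<close> by (simp add: mult_left_mono add_right_mono order_trans)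
  qed
  then show "beta_comb \<beta>1 \<beta>2 s' \<le> beta_comb \<beta>1 \<beta>2 s"
    using assms(1,2) \<open>s \<in> {0<..}\<close> by (simp add: le_beta_comb_iff)
qed

lemma beta_comb_tendsto_0:
  assumes "\<forall>s>0. 0 \<le> \<beta>1 s" "\<forall>s>0. 0 \<le> \<beta>2 s"
    and "(\<beta>1 \<longlongrightarrow> 0) at_top" "(\<beta>2 \<longlongrightarrow> 0) at_top"
  shows "(beta_comb \<beta>1 \<beta>2 \<longlongrightarrow> 0) at_top"
proof (rule order_tendstoI)
  fix a :: real assume "a < 0"
  show "\<forall>\<^sub>F s in at_top. a < beta_comb \<beta>1 \<beta>2 s"
    using eventually_gt_at_top[of 0]
    by (rule eventually_mono) (metis \<open>a < 0\<close> assms(1,2) beta_comb_nonneg order.strict_trans2)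
next
  fix \<epsilon> :: real assume "\<epsilon> > 0"
  have "\<forall>\<^sub>F s1 in at_top. 0 < s1 \<and> \<beta>1 s1 < \<epsilon> / 2"
    using eventually_gt_at_top[of 0] order_tendstoD(2)[OF assms(3) half_gt_zero[OF \<open>\<epsilon> > 0\<close>]]
    by (rule eventually_conj)
  then obtain s1 where s1: "0 < s1" "\<beta>1 s1 < \<epsilon> / 2"
    by (auto simp: eventually_at_top_linorder)
  have "filterlim (\<lambda>s. s / s1) at_top at_top"
    unfolding divide_inverse using \<open>s1 > 0\<close>
    by (intro filterlim_at_top_mult_tendsto_pos[OF tendsto_const] filterlim_ident) simp
  then have "((\<lambda>s. \<beta>2 (s / s1)) \<longlongrightarrow> 0) at_top"
    by (rule filterlim_compose[OF assms(4)])
  then have "\<forall>\<^sub>F s in at_top. \<beta>2 (s / s1) < \<epsilon> / (2 * s1)"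
    using \<open>\<epsilon> > 0\<close> \<open>s1 > 0\<close> by (intro order_tendstoD(2)) (auto intro: divide_pos_pos)
  then show "\<forall>\<^sub>F s in at_top. beta_comb \<beta>1 \<beta>2 s < \<epsilon>"
    using eventually_gt_at_top[of 0]
  proof eventually_elim
    case (elim s)
    have "beta_comb \<beta>1 \<beta>2 (s1 * (s / s1)) \<le> s1 * \<beta>2 (s / s1) + \<beta>1 s1"
      using assms(1,2) \<open>s1 > 0\<close> elim by (intro beta_comb_le) auto
    also have "\<dots> < \<epsilon>"
      using elim s1 by (simp add: field_simps)
    finally show ?case using \<open>s1 > 0\<close> by simp
  qed
qed

lemma beta_comb_chain_bound:
  fixes N E1 E2 p :: real
  assumes "\<forall>s>0. 0 \<le> \<beta>1 s" "\<forall>s>0. 0 \<le> \<beta>2 s" "s > 0" "p \<ge> 0"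
    and bound1: "\<And>s1. s1 > 0 \<Longrightarrow> N \<le> s1 * E1 + \<beta>1 s1 * p"
    and bound2: "\<And>s2. s2 > 0 \<Longrightarrow> E1 \<le> s2 * E2 + \<beta>2 s2 * p"
  shows "N \<le> s * E2 + beta_comb \<beta>1 \<beta>2 s * p"
proof (cases "p = 0")
  case True
  then show ?thesis using bound1[of 1] bound2[of s] \<open>s > 0\<close> by simp
next
  case False
  then have "p > 0" using \<open>p \<ge> 0\<close> by simp
  have "(N - s * E2) / p \<le> s1 * \<beta>2 s2 + \<beta>1 s1"
    if "s1 > 0" "s2 > 0" "s1 * s2 = s" for s1 s2
  proof -
    have "s1 * E1 \<le> s1 * (s2 * E2 + \<beta>2 s2 * p)"
      using that by (intro mult_left_mono bound2) auto
    then have "N \<le> s1 * (s2 * E2 + \<beta>2 s2 * p) + \<beta>1 s1 * p"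
      using bound1[OF \<open>s1 > 0\<close>] by linarith
    also have "\<dots> = s * E2 + (s1 * \<beta>2 s2 + \<beta>1 s1) * p"
      using \<open>s1 * s2 = s\<close> by (simp add: algebra_simps)
    finally show ?thesis using \<open>p > 0\<close> by (simp add: field_simps)
  qed
  then have "(N - s * E2) / p \<le> beta_comb \<beta>1 \<beta>2 s"
    using assms(1-3) by (simp add: le_beta_comb_iff)
  then show ?thesis using \<open>p > 0\<close> by (simp add: field_simps)
qed

lemma beta_comb_chain_bound_ennreal:
  fixes N E1 E2 :: real and \<phi>1 \<phi>2 :: ennreal
  assumes "\<forall>s>0. 0 \<le> \<beta>1 s" "\<forall>s>0. 0 \<le> \<beta>2 s" "s > 0" "beta_comb \<beta>1 \<beta>2 s > 0"
    and bound1: "\<And>s1. s1 > 0 \<Longrightarrow> ereal N \<le> ereal (s1 * E1) + ereal (\<beta>1 s1) * enn2ereal \<phi>1"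
    and bound2: "\<And>s2. s2 > 0 \<Longrightarrow> ereal E1 \<le> ereal (s2 * E2) + ereal (\<beta>2 s2) * enn2ereal \<phi>2"
  shows "ereal N \<le> ereal (s * E2) + ereal (beta_comb \<beta>1 \<beta>2 s) * enn2ereal (max \<phi>1 \<phi>2)"
proof (cases "max \<phi>1 \<phi>2" rule: ennreal_cases)
  case (real p)
  have weaken: "ereal b * enn2ereal \<phi> \<le> ereal (b * p)"
    if "\<phi> \<le> max \<phi>1 \<phi>2" "0 \<le> b" for \<phi> b
  proof -
    have "enn2ereal \<phi> \<le> ereal p"
      using that(1) real by (metis enn2ereal_ennreal less_eq_ennreal.rep_eq)
    then have "ereal b * enn2ereal \<phi> \<le> ereal b * ereal p"
      using that(2) by (intro ereal_mult_left_mono) auto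
    then show ?thesis by simp
  qed
  have "N \<le> s * E2 + beta_comb \<beta>1 \<beta>2 s * p"
  proof (rule beta_comb_chain_bound[OF assms(1-3) \<open>p \<ge> 0\<close>])
    fix s1 :: real assume "s1 > 0"
    have "ereal N \<le> ereal (s1 * E1) + ereal (\<beta>1 s1 * p)"
      using bound1[OF \<open>s1 > 0\<close>] weaken[OF max.cobounded1 assms(1)[rule_format, OF \<open>s1 > 0\<close>]]
      by (metis add_left_mono order_trans)
    then show "N \<le> s1 * E1 + \<beta>1 s1 * p" by simp
  next
    fix s2 :: real assume "s2 > 0"
    have "ereal E1 \<le> ereal (s2 * E2) + ereal (\<beta>2 s2 * p)"
      using bound2[OF \<open>s2 > 0\<close>] weaken[OF max.cobounded2 assms(2)[rule_format, OF \<open>s2 > 0\<close>]]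
      by (metis add_left_mono order_trans)
    then show "E1 \<le> s2 * E2 + \<beta>2 s2 * p" by simp
  qed
  then show ?thesis using real by simp
next
  case top
  then show ?thesis using assms(4) by simp
qed

lemma Kfun_nonneg: "\<forall>s>0. 0 \<le> \<beta> s \<Longrightarrow> 0 \<le> Kfun \<beta> u"
  by (simp add: Kfun_def)

lemma Kfun_beta_comb:
  assumes "\<forall>s>0. 0 \<le> \<beta>1 s" "\<forall>s>0. 0 \<le> \<beta>2 s" "u > 0"
  shows "Kfun (beta_comb \<beta>1 \<beta>2) u
           = Inf {Kfun \<beta>2 u2 + u2 * Kfun \<beta>1 u1 | u1 u2. u1 > 0 \<and> u2 > 0 \<and> u1 * u2 = u}"
proof -
  have all_pos_inverse: "(\<forall>x>0. P x) \<longleftrightarrow> (\<forall>x>0. P (1 / x))" for P :: "real \<Rightarrow> bool"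
    by (metis inverse_eq_divide inverse_inverse_eq inverse_positive_iff_positive)
  have scale: "Kfun \<beta>2 u2 + u2 * Kfun \<beta>1 u1 = u * ((1 / u1) * \<beta>2 (1 / u2) + \<beta>1 (1 / u1))"
    if "u1 > 0" "u2 > 0" "u1 * u2 = u" for u1 u2
    using that by (auto simp: Kfun_def field_simps)
  have "c \<le> Kfun (beta_comb \<beta>1 \<beta>2) u
          \<longleftrightarrow> c \<le> Inf {Kfun \<beta>2 u2 + u2 * Kfun \<beta>1 u1 | u1 u2. u1 > 0 \<and> u2 > 0 \<and> u1 * u2 = u}"
    for c
  proof -
    have "c \<le> Kfun (beta_comb \<beta>1 \<beta>2) u \<longleftrightarrow> c / u \<le> beta_comb \<beta>1 \<beta>2 (1 / u)"
      using \<open>u > 0\<close> by (simp add: Kfun_def field_simps)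
    also have "\<dots> \<longleftrightarrow> (\<forall>s1>0. \<forall>s2>0. s1 * s2 = 1 / u \<longrightarrow> c / u \<le> s1 * \<beta>2 s2 + \<beta>1 s1)"
      using assms by (simp add: le_beta_comb_iff)
    also have "\<dots> \<longleftrightarrow> (\<forall>u1>0. \<forall>u2>0. (1 / u1) * (1 / u2) = 1 / u
                          \<longrightarrow> c / u \<le> (1 / u1) * \<beta>2 (1 / u2) + \<beta>1 (1 / u1))"
      by (subst all_pos_inverse) (subst (2) all_pos_inverse, rule refl)
    also have "\<dots> \<longleftrightarrow> (\<forall>u1>0. \<forall>u2>0. u1 * u2 = u \<longrightarrow> c \<le> Kfun \<beta>2 u2 + u2 * Kfun \<beta>1 u1)"
      using \<open>u > 0\<close> by (auto simp: scale field_simps)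
    also have "\<dots> \<longleftrightarrow> c \<le> Inf {Kfun \<beta>2 u2 + u2 * Kfun \<beta>1 u1 | u1 u2. u1 > 0 \<and> u2 > 0 \<and> u1 * u2 = u}"
      using assms by (intro le_Inf_factorizations_iff[symmetric, of _ 0])
        (auto intro!: add_nonneg_nonneg mult_nonneg_nonneg Kfun_nonneg)
    finally show ?thesis .
  qed
  then show ?thesis by (meson order.antisym order.refl)
qed

lemma convex_conj_nonneg: "F 0 = 0 \<Longrightarrow> 0 \<le> convex_conj F v"
  unfolding convex_conj_def by (rule SUP_upper2[of 0]) (auto simp: zero_ereal_def[symmetric])

lemma convex_conj_le_iff:
  assumes "F 0 = 0"
  shows "convex_conj F v \<le> ereal c \<longleftrightarrow> 0 \<le> c \<and> (\<forall>u>0. ereal u * v - ereal (F u) \<le> ereal c)"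
proof -
  have "{0::real..} = insert 0 {0<..}" by auto
  then show ?thesis
    unfolding convex_conj_def using assms by (auto simp: SUP_le_iff zero_ereal_def[symmetric])
qed

lemma convex_conj_PInf: "convex_conj F \<infinity> = \<infinity>"
proof -
  have "ereal 1 * \<infinity> - ereal (F 1) \<le> convex_conj F \<infinity>"
    unfolding convex_conj_def by (rule SUP_upper) simp
  then show ?thesis by simp
qed

lemma convex_conj_MInf: "F 0 = 0 \<Longrightarrow> convex_conj F (-\<infinity>) = 0"
  using convex_conj_le_iff[of F "-\<infinity>" 0] convex_conj_nonneg[of F "-\<infinity>"]
  by (simp add: zero_ereal_def)

lemma convex_conj_zero: "F 0 = 0 \<Longrightarrow> (\<And>u. u > 0 \<Longrightarrow> 0 \<le> F u) \<Longrightarrow> convex_conj F 0 = 0"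
  using convex_conj_le_iff[of F 0 0] convex_conj_nonneg[of F 0]
  by (simp add: zero_ereal_def)

lemma ereal_mult_minus_le_iff:
  "u > 0 \<Longrightarrow> ereal u * x - ereal k \<le> ereal c \<longleftrightarrow> x \<le> ereal ((c + k) / u)"
  by (cases x) (auto simp: field_simps)

lemma convex_conj_Inf_le_iff:
  fixes K K1 K2 :: "real \<Rightarrow> real"
  assumes "K 0 = 0" "\<And>u. u > 0 \<Longrightarrow> 0 \<le> K1 u" "\<And>u. u > 0 \<Longrightarrow> 0 \<le> K2 u"
    and K: "\<And>u. u > 0 \<Longrightarrow> K u = Inf {K2 u2 + u2 * K1 u1 | u1 u2. u1 > 0 \<and> u2 > 0 \<and> u1 * u2 = u}"
  shows "convex_conj K (ereal r) \<le> ereal c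
           \<longleftrightarrow> 0 \<le> c \<and> (\<forall>u1>0. \<forall>u2>0. u1 * u2 * r - (K2 u2 + u2 * K1 u1) \<le> c)"
proof -
  have "u * r - K u \<le> c
          \<longleftrightarrow> (\<forall>u1>0. \<forall>u2>0. u1 * u2 = u \<longrightarrow> u * r - (K2 u2 + u2 * K1 u1) \<le> c)"
    if "u > 0" for u
  proof -
    have "u * r - K u \<le> c \<longleftrightarrow> u * r - c \<le> K u" by linarith
    also have "\<dots> \<longleftrightarrow> (\<forall>u1>0. \<forall>u2>0. u1 * u2 = u \<longrightarrow> u * r - c \<le> K2 u2 + u2 * K1 u1)"
      using that assms(2,3) by (simp add: K le_Inf_factorizations_iff[of _ 0])
    finally show ?thesis by (simp add: algebra_simps)
  qed
  then show ?thesis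
    using assms(1) by (auto simp: convex_conj_le_iff)
qed

lemma convex_conj_convex_conj_le_iff:
  fixes K1 K2 :: "real \<Rightarrow> real"
  assumes "K1 0 = 0" "K2 0 = 0" "\<And>u. u > 0 \<Longrightarrow> 0 \<le> K2 u"
  shows "convex_conj K2 (convex_conj K1 (ereal r)) \<le> ereal c
           \<longleftrightarrow> 0 \<le> c \<and> (\<forall>u2>0. \<forall>u1>0. u1 * u2 * r - (K2 u2 + u2 * K1 u1) \<le> c)"
proof -
  have rescale: "u1 * r - K1 u1 \<le> (c + K2 u2) / u2
                   \<longleftrightarrow> u1 * u2 * r - (K2 u2 + u2 * K1 u1) \<le> c" if "u2 > 0" for u1 u2
  proof -
    have "u1 * r - K1 u1 \<le> (c + K2 u2) / u2 \<longleftrightarrow> (u1 * r - K1 u1) * u2 \<le> c + K2 u2"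
      by (rule pos_le_divide_eq[OF that])
    also have "(u1 * r - K1 u1) * u2 = u1 * u2 * r - u2 * K1 u1"
      by (simp add: algebra_simps)
    finally show ?thesis by linarith
  qed
  have "convex_conj K2 (convex_conj K1 (ereal r)) \<le> ereal c
         \<longleftrightarrow> 0 \<le> c \<and> (\<forall>u2>0. convex_conj K1 (ereal r) \<le> ereal ((c + K2 u2) / u2))"
    using assms(2) by (simp add: convex_conj_le_iff ereal_mult_minus_le_iff)
  also have "\<dots> \<longleftrightarrow> 0 \<le> c \<and> (\<forall>u2>0. \<forall>u1>0. u1 * r - K1 u1 \<le> (c + K2 u2) / u2)"
    using assms(1,3) by (auto simp: convex_conj_le_iff)
  finally show ?thesis by (simp add: rescale)
qed

lemma convex_conj_comp:
  fixes K K1 K2 :: "real \<Rightarrow> real"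
  assumes K0: "K 0 = 0" "K1 0 = 0" "K2 0 = 0"
    and K1_nonneg: "\<And>u. u > 0 \<Longrightarrow> 0 \<le> K1 u" and K2_nonneg: "\<And>u. u > 0 \<Longrightarrow> 0 \<le> K2 u"
    and K: "\<And>u. u > 0 \<Longrightarrow> K u = Inf {K2 u2 + u2 * K1 u1 | u1 u2. u1 > 0 \<and> u2 > 0 \<and> u1 * u2 = u}"
  shows "convex_conj K v = convex_conj K2 (convex_conj K1 v)"
proof (cases v)
  case (real r)
  have "convex_conj K v \<le> ereal c \<longleftrightarrow> convex_conj K2 (convex_conj K1 v) \<le> ereal c" for c
    unfolding real
    by (simp add: convex_conj_Inf_le_iff[of K K1 K2, OF K0(1) K1_nonneg K2_nonneg K]
        convex_conj_convex_conj_le_iff[of K1 K2, OF K0(2,3) K2_nonneg]) blast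
  then show ?thesis
    by (metis order.antisym ereal_le_real)
next
  case PInf
  then show ?thesis by (simp add: convex_conj_PInf)
next
  case MInf
  then show ?thesis using K0 K2_nonneg by (simp add: convex_conj_MInf convex_conj_zero)
qed

theorem proposition32:
  fixes M :: "'a measure"
    and P1 P2 :: "'a \<Rightarrow> 'a measure"
    and T1 T2 :: "('a \<Rightarrow> real) \<Rightarrow> ('a \<Rightarrow> real)"
    and \<beta>1 \<beta>2 :: "real \<Rightarrow> real"
    and \<Phi>1 \<Phi>2 :: "('a \<Rightarrow> real) \<Rightarrow> ennreal"
  assumes M: "prob_space M"
    and P1: "invariant_markov_kernel M P1" and P2: "invariant_markov_kernel M P2"
    and T1: "P_or_PstarP M P1 T1" and T2: "P_or_PstarP M P2 T2"
    and \<beta>1_pos: "\<forall>s>0. \<beta>1 s > 0" and \<beta>1_dec: "antimono_on {0<..} \<beta>1"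
    and \<beta>1_lim: "(\<beta>1 \<longlongrightarrow> 0) at_top"
    and \<beta>2_pos: "\<forall>s>0. \<beta>2 s > 0" and \<beta>2_dec: "antimono_on {0<..} \<beta>2"
    and \<beta>2_lim: "(\<beta>2 \<longlongrightarrow> 0) at_top"
    and \<Phi>1_hom: "\<forall>f\<in>L2 M. \<forall>c>0. \<Phi>1 (\<lambda>x. c * f x) = ennreal (c\<^sup>2) * \<Phi>1 f"
    and \<Phi>2_hom: "\<forall>f\<in>L2 M. \<forall>c>0. \<Phi>2 (\<lambda>x. c * f x) = ennreal (c\<^sup>2) * \<Phi>2 f"
    and \<Phi>1_P1: "\<forall>f\<in>L2 M. \<forall>n. \<Phi>1 ((kop P1 ^^ n) f) \<le> \<Phi>1 f"
    and \<Phi>2_P2: "\<forall>f\<in>L2 M. \<forall>n. \<Phi>2 ((kop P2 ^^ n) f) \<le> \<Phi>2 f"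
    and \<Phi>1_a: "\<forall>f\<in>L2 M. ennreal (normsq_L2 M (\<lambda>x. f x - (\<integral>y. f y \<partial>M)))
                 \<le> a_const M \<Phi>1 * \<Phi>1 (\<lambda>x. f x - (\<integral>y. f y \<partial>M))"
    and \<Phi>2_a: "\<forall>f\<in>L2 M. ennreal (normsq_L2 M (\<lambda>x. f x - (\<integral>y. f y \<partial>M)))
                 \<le> a_const M \<Phi>2 * \<Phi>2 (\<lambda>x. f x - (\<integral>y. f y \<partial>M))"
    and \<Phi>1_P2: "\<forall>f\<in>L2_0 M. \<forall>n. \<Phi>1 ((kop P2 ^^ n) f) \<le> \<Phi>1 f"
    and WPI1: "\<forall>s>0. \<forall>f\<in>L2_0 M. ereal (normsq_L2 M f)
                 \<le> ereal (s * dirichlet M T1 f) + ereal (\<beta>1 s) * enn2ereal (\<Phi>1 f)"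
    and WPI2: "\<forall>s>0. \<forall>f\<in>L2_0 M. ereal (dirichlet M T1 f)
                 \<le> ereal (s * dirichlet M T2 f) + ereal (\<beta>2 s) * enn2ereal (\<Phi>2 f)"
  shows "(\<forall>s>0. \<forall>f\<in>L2_0 M. ereal (normsq_L2 M f)
            \<le> ereal (s * dirichlet M T2 f)
               + ereal (beta_comb \<beta>1 \<beta>2 s) * enn2ereal (max (\<Phi>1 f) (\<Phi>2 f)))
       \<and> (\<forall>s>0. beta_comb \<beta>1 \<beta>2 s > 0)
       \<and> antimono_on {0<..} (beta_comb \<beta>1 \<beta>2)
       \<and> (beta_comb \<beta>1 \<beta>2 \<longlongrightarrow> 0) at_top
       \<and> (\<forall>f\<in>L2 M. \<forall>c>0. max (\<Phi>1 (\<lambda>x. c * f x)) (\<Phi>2 (\<lambda>x. c * f x))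
                            = ennreal (c\<^sup>2) * max (\<Phi>1 f) (\<Phi>2 f))
       \<and> (\<forall>f\<in>L2_0 M. \<forall>n. max (\<Phi>1 ((kop P2 ^^ n) f)) (\<Phi>2 ((kop P2 ^^ n) f))
                            \<le> max (\<Phi>1 f) (\<Phi>2 f))
       \<and> (\<forall>u>0. Kfun (beta_comb \<beta>1 \<beta>2) u
              = Inf {Kfun \<beta>2 u2 + u2 * Kfun \<beta>1 u1 | u1 u2. u1 > 0 \<and> u2 > 0 \<and> u1 * u2 = u})
       \<and> convex_conj (Kfun (beta_comb \<beta>1 \<beta>2)) = convex_conj (Kfun \<beta>2) \<circ> convex_conj (Kfun \<beta>1)"
proof -
  have \<beta>1_nonneg: "\<forall>s>0. 0 \<le> \<beta>1 s" and \<beta>2_nonneg: "\<forall>s>0. 0 \<le> \<beta>2 s"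
    using \<beta>1_pos \<beta>2_pos by (simp_all add: less_imp_le)
  have \<beta>_pos: "\<forall>s>0. beta_comb \<beta>1 \<beta>2 s > 0"
    using beta_comb_pos[OF _ \<beta>1_pos \<beta>2_pos \<beta>1_dec \<beta>2_dec] by blast
  have "\<forall>s>0. \<forall>f\<in>L2_0 M. ereal (normsq_L2 M f)
            \<le> ereal (s * dirichlet M T2 f)
               + ereal (beta_comb \<beta>1 \<beta>2 s) * enn2ereal (max (\<Phi>1 f) (\<Phi>2 f))"
    using WPI1 WPI2 \<beta>_pos by (auto intro!: beta_comb_chain_bound_ennreal[OF \<beta>1_nonneg \<beta>2_nonneg])
  moreover have "\<forall>f\<in>L2 M. \<forall>c>0. max (\<Phi>1 (\<lambda>x. c * f x)) (\<Phi>2 (\<lambda>x. c * f x))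
                            = ennreal (c\<^sup>2) * max (\<Phi>1 f) (\<Phi>2 f)"
    using \<Phi>1_hom \<Phi>2_hom by (simp add: max_of_mono[OF Rings.mono_mult])
  moreover have "\<forall>f\<in>L2_0 M. \<forall>n. max (\<Phi>1 ((kop P2 ^^ n) f)) (\<Phi>2 ((kop P2 ^^ n) f))
                            \<le> max (\<Phi>1 f) (\<Phi>2 f)"
    by (intro ballI allI max.mono) (use \<Phi>1_P2 \<Phi>2_P2 in \<open>auto simp: L2_0_def\<close>)
  moreover have K_eq: "\<forall>u>0. Kfun (beta_comb \<beta>1 \<beta>2) u
              = Inf {Kfun \<beta>2 u2 + u2 * Kfun \<beta>1 u1 | u1 u2. u1 > 0 \<and> u2 > 0 \<and> u1 * u2 = u}"
    using Kfun_beta_comb[OF \<beta>1_nonneg \<beta>2_nonneg] by blast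
  moreover have "convex_conj (Kfun (beta_comb \<beta>1 \<beta>2)) = convex_conj (Kfun \<beta>2) \<circ> convex_conj (Kfun \<beta>1)"
  proof (rule ext, unfold comp_def, rule convex_conj_comp)
    show "\<And>u. u > 0 \<Longrightarrow> Kfun (beta_comb \<beta>1 \<beta>2) u
            = Inf {Kfun \<beta>2 u2 + u2 * Kfun \<beta>1 u1 | u1 u2. u1 > 0 \<and> u2 > 0 \<and> u1 * u2 = u}"
      using K_eq by blast
  qed (use \<beta>1_nonneg \<beta>2_nonneg in \<open>auto simp: Kfun_def\<close>)
  ultimately show ?thesis
    using \<beta>_pos antimono_beta_comb[OF \<beta>1_nonneg \<beta>2_nonneg \<beta>2_dec]
      beta_comb_tendsto_0[OF \<beta>1_nonneg \<beta>2_nonneg \<beta>1_lim \<beta>2_lim]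
    by blast
qed

end
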